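(* Let $d\ge2$, $\alpha\in(0,\infty)^d$, $N\in\mathbb Z_+$, $j\in\{1,\dots,d\}$, and let $e_j$ be the $j$-th standard basis vector of $\mathbb R^d$. Then for every $s\in N\Delta_{(d-1)}$ and $0\le n\le N$, $$H^{\alpha}_n(s,Ne_j)=H^{(\alpha_j,|\alpha|-\alpha_j)}_n(s_j,N).$$
   Context: $N\Delta_{(d-1)}=\{r\in\mathbb Z_+^d:\sum_ir_i=N\}$, $|\alpha|=\sum_i\alpha_i$. $DM_\beta(l;N)=\binom{N}{l}\prod_i(\beta_i)_{(l_i)}/(|\beta|)_{(N)}$ with $(c)_{(k)}=\Gamma(c+k)/\Gamma(c)$. The Hahn kernel $H^\beta_n(r,s)=\sum_kP_k(r)P_k(s)$, where $(P_k)$ is an orthonormal basis, in $L^2(DM_\beta(\cdot;N))$, of the polynomials in $r$ of degree $\le n$ orthogonal to all polynomials of degree $<n$. For $d=2$ and $a,b>0$, $H^{(a,b)}_n(k,k')$, $k,k'\in\{0,\dots,N\}$, is this kernel for $DM_{(a,b)}(\cdot;N)$ written as a function of the first coordinate. *)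

theory Defs
  imports Complex_Main
begin

text \<open>Points of N Delta_(d-1): nonnegative integer vectors indexed by 0..d-1
  (coordinates at indices >= d are 0), summing to N.\<close>
definition simplex :: "nat \<Rightarrow> nat \<Rightarrow> (nat \<Rightarrow> nat) set" where
  "simplex d N = {r. (\<forall>i\<ge>d. r i = 0) \<and> (\<Sum>i<d. r i) = N}"

definition vabs :: "nat \<Rightarrow> (nat \<Rightarrow> real) \<Rightarrow> real" where
  "vabs d \<beta> = (\<Sum>i<d. \<beta> i)"

definition DM :: "nat \<Rightarrow> (nat \<Rightarrow> real) \<Rightarrow> nat \<Rightarrow> (nat \<Rightarrow> nat) \<Rightarrow> real" where
  "DM d \<beta> N l = (fact N / (\<Prod>i<d. fact (l i))) * (\<Prod>i<d. pochhammer (\<beta> i) (l i))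
                  / pochhammer (vabs d \<beta>) N"

definition inner_DM :: "nat \<Rightarrow> (nat \<Rightarrow> real) \<Rightarrow> nat \<Rightarrow> ((nat \<Rightarrow> nat) \<Rightarrow> real)
    \<Rightarrow> ((nat \<Rightarrow> nat) \<Rightarrow> real) \<Rightarrow> real" where
  "inner_DM d \<beta> N f g = (\<Sum>r\<in>simplex d N. DM d \<beta> N r * f r * g r)"

definition exps :: "nat \<Rightarrow> nat \<Rightarrow> (nat \<Rightarrow> nat) set" where
  "exps d n = {m. (\<forall>i\<ge>d. m i = 0) \<and> (\<Sum>i<d. m i) \<le> n}"

definition polyfun :: "nat \<Rightarrow> nat \<Rightarrow> nat \<Rightarrow> ((nat \<Rightarrow> nat) \<Rightarrow> real) \<Rightarrow> bool" where
  "polyfun d N n f \<longleftrightarrow> (\<exists>c. \<forall>r\<in>simplex d N.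
      f r = (\<Sum>m\<in>exps d n. c m * (\<Prod>i<d. real (r i) ^ m i)))"

definition Vspace :: "nat \<Rightarrow> (nat \<Rightarrow> real) \<Rightarrow> nat \<Rightarrow> nat \<Rightarrow> ((nat \<Rightarrow> nat) \<Rightarrow> real) \<Rightarrow> bool" where
  "Vspace d \<beta> N n f \<longleftrightarrow> polyfun d N n f \<and>
      (0 < n \<longrightarrow> (\<forall>g. polyfun d N (n - 1) g \<longrightarrow> inner_DM d \<beta> N f g = 0))"

definition is_ONB :: "nat \<Rightarrow> (nat \<Rightarrow> real) \<Rightarrow> nat \<Rightarrow> nat \<Rightarrow> ((nat \<Rightarrow> nat) \<Rightarrow> real) set \<Rightarrow> bool" where
  "is_ONB d \<beta> N n B \<longleftrightarrow> finite B \<and>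
     (\<forall>P\<in>B. Vspace d \<beta> N n P \<and> (\<forall>r. r \<notin> simplex d N \<longrightarrow> P r = 0)) \<and>
     (\<forall>P\<in>B. \<forall>Q\<in>B. inner_DM d \<beta> N P Q = (if P = Q then 1 else 0)) \<and>
     (\<forall>f. Vspace d \<beta> N n f \<longrightarrow> (\<exists>c. \<forall>r\<in>simplex d N. f r = (\<Sum>P\<in>B. c P * P r)))"

definition hahn_kernel :: "nat \<Rightarrow> (nat \<Rightarrow> real) \<Rightarrow> nat \<Rightarrow> nat \<Rightarrow> (nat \<Rightarrow> nat) \<Rightarrow> (nat \<Rightarrow> nat) \<Rightarrow> real" where
  "hahn_kernel d \<beta> N n r s = (let B = (SOME B. is_ONB d \<beta> N n B) in (\<Sum>P\<in>B. P r * P s))"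

definition pt2 :: "nat \<Rightarrow> nat \<Rightarrow> (nat \<Rightarrow> nat)" where
  "pt2 N k = (\<lambda>i. if i = 0 then k else if i = 1 then N - k else 0)"

definition hahn2 :: "real \<Rightarrow> real \<Rightarrow> nat \<Rightarrow> nat \<Rightarrow> nat \<Rightarrow> nat \<Rightarrow> real" where
  "hahn2 a b N n k k' = hahn_kernel 2 (\<lambda>i. if i = 0 then a else b) N n (pt2 N k) (pt2 N k')"

end

theory Submission
  imports Defs "HOL-Computational_Algebra.Formal_Power_Series" "HOL-Computational_Algebra.Polynomial"
begin

(* Write v = N e_j and let K be the two-type Hahn kernel of the lumped law
   DM_(alpha_j, |alpha| - alpha_j) evaluated at (N, 0).  On the 2-simplex K is a polynomial
   q(k) of degree <= n in the first coordinate k.  The claim is that g(s) = q(s_j) is the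
   d-type Hahn kernel at v.  A kernel is characterised as the unique element of the space of
   degree-n orthogonal polynomials that reproduces evaluation at v, so it suffices to show
   (a) g lies in that space and (b) <g, P> = P(v) for every P in it.  Both follow from one
   transfer identity: the conditional expectation of a polynomial f of degree <= n given s_j
   is a polynomial of degree <= n in s_j (its "marginal"), hence <h(s_j), f> equals the
   two-type inner product of h with that marginal. *)

section \<open>Negative binomial weights and falling factorials\<close>

text \<open>Negative binomial weights (A)_x / x!, the coefficients of (1 - z) powr (-A); the
  Dirichlet-multinomial weight is proportional to a product of them.\<close>
definition negbin :: "real \<Rightarrow> nat \<Rightarrow> real" where
  "negbin A x = pochhammer A x / fact x"

lemma negbin_0 [simp]: "negbin A 0 = 1"
  by (simp add: negbin_def)

lemma negbin_pos: "A > 0 \<Longrightarrow> negbin A x > 0"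
  unfolding negbin_def by (simp add: pochhammer_pos)

lemma negbin_zero_param: "negbin 0 M = (if M = 0 then 1 else 0)"
  by (simp add: negbin_def pochhammer_0_left)

lemma negbin_gchoose: "negbin A x = (-1)^x * ((-A) gchoose x)"
  by (simp add: negbin_def gbinomial_pochhammer)

lemma negbin_vandermonde: "(\<Sum>x\<le>M. negbin A x * negbin B (M - x)) = negbin (A + B) M"
proof -
  have "(\<Sum>x\<le>M. negbin A x * negbin B (M - x))
      = (\<Sum>x\<in>{0..M}. (-1)^M * (((-A) gchoose x) * ((-B) gchoose (M - x))))"
    by (rule sum.cong) (auto simp: negbin_gchoose power_add[symmetric])
  also have "\<dots> = (-1)^M * (((-A) + (-B)) gchoose M)"
    by (simp add: sum_distrib_left[symmetric] gbinomial_Vandermonde)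
  finally show ?thesis by (simp add: negbin_gchoose)
qed

text \<open>Falling factorials x (x - 1) ... (x - t + 1): the basis in which moments of the
  weights have closed forms.\<close>
definition falling :: "real \<Rightarrow> nat \<Rightarrow> real" where
  "falling x t = (\<Prod>i<t. x - real i)"

lemma falling_0 [simp]: "falling x 0 = 1"
  by (simp add: falling_def)

lemma falling_Suc: "falling x (Suc t) = falling x t * (x - real t)"
  by (simp add: falling_def)

lemma falling_nat_zero: "r < t \<Longrightarrow> falling (real r) t = 0"
  unfolding falling_def by (rule prod_zero) auto

lemma falling_fact: "falling (real (r + t)) t = fact (r + t) / fact r"
proof (induction t arbitrary: r)
  case 0
  then show ?case by simp
next
  case (Suc t)
  have "falling (real (r + Suc t)) (Suc t) = falling (real (Suc r + t)) t * real (Suc r)"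
    by (simp add: falling_Suc)
  also have "\<dots> = fact (Suc r + t) / fact r"
    by (simp only: Suc.IH fact_Suc) simp
  finally show ?case by simp
qed

lemma negbin_falling:
  "negbin A (r + t) * falling (real (r + t)) t = pochhammer A t * negbin (A + real t) r"
proof -
  have "negbin A (r + t) * falling (real (r + t)) t = pochhammer A (t + r) / fact r"
    unfolding negbin_def falling_fact by (simp add: add.commute)
  also have "\<dots> = pochhammer A t * negbin (A + real t) r"
    by (simp add: pochhammer_product' negbin_def)
  finally show ?thesis .
qed

lemma falling_pair_vanishes:
  assumes "x < s \<or> M - x < t"
  shows "negbin A x * negbin B (M - x) * falling (real x) s * falling (real (M - x)) t = 0"
  using assms by (auto simp: falling_nat_zero)

text \<open>Binomial convolution of falling-factorial moments: summing the product of falling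
  factorials of x and M - x against the weights negbin A x * negbin B (M - x) gives a closed
  form (Vandermonde after shifting the summation index by s).\<close>
lemma negbin_falling_convolution:
  "(\<Sum>x\<le>M. negbin A x * negbin B (M - x) * falling (real x) s * falling (real (M - x)) t)
   = (if s + t \<le> M then pochhammer A s * pochhammer B t * negbin (A + B + real s + real t) (M - s - t)
      else 0)"
  (is "sum ?g {..M} = _")
proof (cases "s + t \<le> M")
  case False
  have "?g x = 0" if "x \<le> M" for x
    by (rule falling_pair_vanishes) (use False that in linarith)
  then have "sum ?g {..M} = 0" by (intro sum.neutral ballI) simp
  then show ?thesis using False by simp
next
  case True
  define M' where "M' = M - s - t"
  have vanish: "?g x = 0" if "x \<le> M" "x \<notin> (\<lambda>y. y + s) ` {..M'}" for x
  proof (rule falling_pair_vanishes)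
    show "x < s \<or> M - x < t"
    proof (cases "x < s")
      case False
      then have "x - s > M'" using that(2) by (metis atMost_iff image_eqI le_add_diff_inverse2 not_le)
      then show ?thesis using that(1) unfolding M'_def by linarith
    qed simp
  qed
  have "sum ?g {..M} = sum ?g ((\<lambda>y. y + s) ` {..M'})"
    by (rule sum.mono_neutral_right) (use True vanish in \<open>auto simp: M'_def\<close>)
  also have "\<dots> = (\<Sum>y\<le>M'. ?g (y + s))"
    by (subst sum.reindex) (auto simp: inj_on_def)
  also have "\<dots> = (\<Sum>y\<le>M'. (pochhammer A s * negbin (A + real s) y)
                           * (pochhammer B t * negbin (B + real t) (M' - y)))"
  proof (rule sum.cong[OF refl])
    fix y assume "y \<in> {..M'}"
    then have "M - (y + s) = (M' - y) + t" using True by (auto simp: M'_def)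
    then have "?g (y + s) = (negbin A (y + s) * falling (real (y + s)) s)
                * (negbin B ((M' - y) + t) * falling (real ((M' - y) + t)) t)"
      by simp
    then show "?g (y + s) = (pochhammer A s * negbin (A + real s) y)
                * (pochhammer B t * negbin (B + real t) (M' - y))"
      by (simp only: negbin_falling)
  qed
  also have "\<dots> = pochhammer A s * pochhammer B t
                  * (\<Sum>y\<le>M'. negbin (A + real s) y * negbin (B + real t) (M' - y))"
    by (simp add: sum_distrib_left mult_ac)
  also have "\<dots> = pochhammer A s * pochhammer B t * negbin (A + B + real s + real t) M'"
    by (simp add: negbin_vandermonde add_ac)
  finally show ?thesis using True by (simp add: M'_def)
qed

lemma negbin_falling_convolution_normalised:
  assumes "A + B > 0"
  shows "(\<Sum>x\<le>M. negbin A x * negbin B (M - x) * falling (real x) s * falling (real (M - x)) t)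
   = negbin (A + B) M * falling (real M) (s + t)
     * (pochhammer A s * pochhammer B t / pochhammer (A + B) (s + t))"
proof (cases "s + t \<le> M")
  case True
  have nz: "pochhammer (A + B) (s + t) \<noteq> 0"
    using pochhammer_pos[OF assms] by (metis less_irrefl)
  have "negbin (A + B) M * falling (real M) (s + t)
      = negbin (A + B) ((M - (s + t)) + (s + t)) * falling (real ((M - (s + t)) + (s + t))) (s + t)"
    using True by simp
  also have "\<dots> = pochhammer (A + B) (s + t) * negbin (A + B + real (s + t)) (M - (s + t))"
    by (rule negbin_falling)
  finally have weight: "negbin (A + B) M * falling (real M) (s + t)
      = pochhammer (A + B) (s + t) * negbin (A + B + real (s + t)) (M - (s + t))" .
  have "(\<Sum>x\<le>M. negbin A x * negbin B (M - x) * falling (real x) s * falling (real (M - x)) t)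
      = pochhammer A s * pochhammer B t * negbin (A + B + real (s + t)) (M - (s + t))"
    by (subst negbin_falling_convolution) (simp add: True add.assoc diff_diff_add)
  then show ?thesis
    unfolding weight using nz by simp
next
  case False
  then show ?thesis by (subst negbin_falling_convolution) (simp add: falling_nat_zero)
qed

definition falling_span :: "nat \<Rightarrow> (real \<Rightarrow> real) \<Rightarrow> bool" where
  "falling_span a f \<longleftrightarrow> (\<exists>c. \<forall>x. f x = (\<Sum>t\<le>a. c t * falling x t))"

lemma falling_span_const: "falling_span 0 (\<lambda>_. c)"
  unfolding falling_span_def by (intro exI[of _ "\<lambda>_. c"]) simp

lemma falling_span_add:
  assumes "falling_span a f" "falling_span a g"
  shows "falling_span a (\<lambda>x. f x + g x)"
proof -
  obtain c1 c2 where "\<forall>x. f x = (\<Sum>t\<le>a. c1 t * falling x t)" "\<forall>x. g x = (\<Sum>t\<le>a. c2 t * falling x t)"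
    using assms unfolding falling_span_def by blast
  then show ?thesis
    unfolding falling_span_def
    by (intro exI[of _ "\<lambda>t. c1 t + c2 t"]) (simp add: distrib_right sum.distrib)
qed

lemma falling_span_mono:
  assumes "falling_span a f" "a \<le> b"
  shows "falling_span b f"
proof -
  obtain c where c: "\<forall>x. f x = (\<Sum>t\<le>a. c t * falling x t)"
    using assms(1) unfolding falling_span_def by blast
  have "f x = (\<Sum>t\<le>b. (if t \<le> a then c t else 0) * falling x t)" for x
  proof -
    have "(\<Sum>t\<le>b. (if t \<le> a then c t else 0) * falling x t)
        = (\<Sum>t\<le>a. (if t \<le> a then c t else 0) * falling x t)"
      by (rule sum.mono_neutral_right) (use assms(2) in auto)
    then show ?thesis using c by simp
  qed
  then show ?thesis
    unfolding falling_span_def by (intro exI[of _ "\<lambda>t. if t \<le> a then c t else 0"]) blast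
qed

text \<open>Multiplication by x raises the order by one, since x times the falling factorial of
  order t equals the one of order t + 1 plus t times the one of order t.\<close>
lemma falling_span_times_x:
  assumes "falling_span a f"
  shows "falling_span (Suc a) (\<lambda>x. x * f x)"
proof -
  obtain c where c: "\<forall>x. f x = (\<Sum>t\<le>a. c t * falling x t)"
    using assms unfolding falling_span_def by blast
  define c' where "c' t = (if t = 0 then 0 else c (t - 1)) + (if t \<le> a then c t * real t else 0)" for t
  have "x * f x = (\<Sum>t\<le>Suc a. c' t * falling x t)" for x
  proof -
    have step: "x * falling x t = falling x (Suc t) + real t * falling x t" for t
      by (simp add: falling_Suc algebra_simps)
    have "x * f x = (\<Sum>t\<le>a. c t * (x * falling x t))"
      by (simp add: c sum_distrib_left mult_ac)
    also have "\<dots> = (\<Sum>t\<le>a. c t * falling x (Suc t)) + (\<Sum>t\<le>a. c t * real t * falling x t)"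
      by (simp add: step distrib_left sum.distrib mult_ac)
    also have "(\<Sum>t\<le>a. c t * falling x (Suc t))
        = (\<Sum>t\<le>Suc a. (if t = 0 then 0 else c (t - 1)) * falling x t)"
      by (subst sum.atMost_Suc_shift) simp
    also have "(\<Sum>t\<le>a. c t * real t * falling x t)
        = (\<Sum>t\<le>Suc a. (if t \<le> a then c t * real t else 0) * falling x t)"
      by (simp add: sum.atMost_Suc)
    finally show ?thesis
      by (simp add: c'_def distrib_right sum.distrib)
  qed
  then show ?thesis unfolding falling_span_def by (intro exI[of _ c']) blast
qed

lemma falling_span_poly: "falling_span (degree p) (poly p)"
proof (induction p)
  case 0
  show ?case using falling_span_const[of 0] by simp
next
  case (pCons a p)
  show ?case
  proof (cases "p = 0")
    case True
    then show ?thesis using falling_span_const[of a] by simp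
  next
    case False
    have "falling_span (Suc (degree p)) (\<lambda>x. a + x * poly p x)"
      by (intro falling_span_add falling_span_mono[OF falling_span_const]
          falling_span_times_x pCons.IH) simp
    then show ?thesis using False by (simp add: degree_pCons_eq)
  qed
qed

lemma negbin_poly_convolution:
  assumes "A + B > 0"
  shows "\<exists>P. degree P \<le> degree p + degree q \<and> (\<forall>M.
           (\<Sum>x\<le>M. negbin A x * negbin B (M - x) * poly p (real x) * poly q (real (M - x)))
           = negbin (A + B) M * poly P (real M))"
proof -
  obtain c where c: "\<forall>x. poly p x = (\<Sum>s\<le>degree p. c s * falling x s)"
    using falling_span_poly[of p] unfolding falling_span_def by blast
  obtain e where e: "\<forall>x. poly q x = (\<Sum>t\<le>degree q. e t * falling x t)"
    using falling_span_poly[of q] unfolding falling_span_def by blast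
  define \<kappa> where "\<kappa> s t = pochhammer A s * pochhammer B t / pochhammer (A + B) (s + t)" for s t
  define fpoly :: "nat \<Rightarrow> real poly" where "fpoly t = (\<Prod>i<t. [:- real i, 1:])" for t
  have poly_fpoly: "poly (fpoly t) x = falling x t" for t x
    by (simp add: fpoly_def falling_def poly_prod)
  have degree_fpoly: "degree (fpoly t) \<le> t" for t
    using degree_prod_sum_le[of "{..<t}" "\<lambda>i. [:- real i, 1:]"] by (simp add: fpoly_def)
  define P where "P = (\<Sum>s\<le>degree p. \<Sum>t\<le>degree q. smult (c s * e t * \<kappa> s t) (fpoly (s + t)))"
  have "degree P \<le> degree p + degree q"
    unfolding P_def
  proof (intro degree_sum_le)
    fix s t assume "s \<in> {..degree p}" "t \<in> {..degree q}"
    then have "degree (fpoly (s + t)) \<le> degree p + degree q"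
      using degree_fpoly[of "s + t"] by simp
    then show "degree (smult (c s * e t * \<kappa> s t) (fpoly (s + t))) \<le> degree p + degree q"
      using degree_smult_le order_trans by blast
  qed auto
  moreover have "(\<Sum>x\<le>M. negbin A x * negbin B (M - x) * poly p (real x) * poly q (real (M - x)))
           = negbin (A + B) M * poly P (real M)" for M
  proof -
    have "(\<Sum>x\<le>M. negbin A x * negbin B (M - x) * poly p (real x) * poly q (real (M - x)))
        = (\<Sum>x\<le>M. \<Sum>s\<le>degree p. \<Sum>t\<le>degree q. c s * e t
             * (negbin A x * negbin B (M - x) * falling (real x) s * falling (real (M - x)) t))"
      by (simp add: c e sum_distrib_left sum_distrib_right mult_ac)
    also have "\<dots> = (\<Sum>s\<le>degree p. \<Sum>t\<le>degree q. c s * e t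
             * (\<Sum>x\<le>M. negbin A x * negbin B (M - x) * falling (real x) s * falling (real (M - x)) t))"
      by (simp add: sum_distrib_left sum.swap[of _ "{..M}"])
    also have "\<dots> = (\<Sum>s\<le>degree p. \<Sum>t\<le>degree q. c s * e t
             * (negbin (A + B) M * falling (real M) (s + t) * \<kappa> s t))"
      by (simp only: negbin_falling_convolution_normalised[OF assms] \<kappa>_def)
    also have "\<dots> = negbin (A + B) M * poly P (real M)"
      by (simp add: P_def poly_sum poly_fpoly sum_distrib_left mult_ac)
    finally show ?thesis .
  qed
  ultimately show ?thesis by blast
qed

section \<open>Compositions and multinomial moments\<close>

definition compositions :: "nat set \<Rightarrow> nat \<Rightarrow> (nat \<Rightarrow> nat) set" where
  "compositions I M = {r. (\<forall>i. i \<notin> I \<longrightarrow> r i = 0) \<and> sum r I = M}"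

lemma compositions_zero_outside: "r \<in> compositions I M \<Longrightarrow> i \<notin> I \<Longrightarrow> r i = 0"
  by (simp add: compositions_def)

lemma compositions_empty: "compositions {} M = (if M = 0 then {\<lambda>_. 0} else {})"
  by (auto simp: compositions_def)

lemma compositions_of_zero: "finite I \<Longrightarrow> compositions I 0 = {\<lambda>_. 0}"
  unfolding compositions_def by (auto simp: fun_eq_iff)

lemma compositions_insert:
  assumes "a \<notin> I" "finite I"
  shows "compositions (insert a I) M
       = (\<lambda>(x, r). r(a := x)) ` (SIGMA x:{..M}. compositions I (M - x))"
proof
  show "compositions (insert a I) M \<subseteq> (\<lambda>(x, r). r(a := x)) ` (SIGMA x:{..M}. compositions I (M - x))"
  proof
    fix r assume r: "r \<in> compositions (insert a I) M"
    then have total: "r a + sum r I = M" using assms by (simp add: compositions_def)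
    have "sum (r(a := 0)) I = sum r I" by (rule sum.cong) (use assms in auto)
    then have "r(a := 0) \<in> compositions I (M - r a)"
      using r total assms unfolding compositions_def by auto
    moreover have "r = (\<lambda>(x, r). r(a := x)) (r a, r(a := 0))" by simp
    moreover have "r a \<le> M" using total by simp
    ultimately show "r \<in> (\<lambda>(x, r). r(a := x)) ` (SIGMA x:{..M}. compositions I (M - x))" by blast
  qed
next
  show "(\<lambda>(x, r). r(a := x)) ` (SIGMA x:{..M}. compositions I (M - x)) \<subseteq> compositions (insert a I) M"
  proof
    fix y assume "y \<in> (\<lambda>(x, r). r(a := x)) ` (SIGMA x:{..M}. compositions I (M - x))"
    then obtain x r where x: "x \<le> M" and r: "r \<in> compositions I (M - x)" and y: "y = r(a := x)"
      by auto
    have "sum y I = sum r I" unfolding y using assms by (intro sum.cong) auto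
    then show "y \<in> compositions (insert a I) M"
      using x r assms unfolding compositions_def y by auto
  qed
qed

lemma finite_compositions: "finite I \<Longrightarrow> finite (compositions I M)"
proof (induction I arbitrary: M rule: finite_induct)
  case empty
  then show ?case by (simp add: compositions_empty)
next
  case (insert a I)
  then show ?case by (simp add: compositions_insert)
qed

lemma sum_compositions_insert:
  assumes "a \<notin> I" "finite I"
  shows "(\<Sum>r\<in>compositions (insert a I) M. G r)
       = (\<Sum>x\<le>M. \<Sum>r\<in>compositions I (M - x). G (r(a := x)))"
proof -
  have inj: "inj_on (\<lambda>(x, r). r(a := x)) (SIGMA x:{..M}. compositions I (M - x))"
  proof (rule inj_onI, clarify)
    fix x r x' r'
    assume r: "r \<in> compositions I (M - x)" and r': "r' \<in> compositions I (M - x')"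
      and eq: "r(a := x) = r'(a := x')"
    have "r i = r' i" for i
      using fun_cong[OF eq, of i] compositions_zero_outside[OF r] compositions_zero_outside[OF r'] assms
      by (cases "i = a") auto
    then show "x = x' \<and> r = r'" using fun_cong[OF eq, of a] by auto
  qed
  have "(\<Sum>r\<in>compositions (insert a I) M. G r)
      = (\<Sum>(x, r)\<in>(SIGMA x:{..M}. compositions I (M - x)). G (r(a := x)))"
    unfolding compositions_insert[OF assms]
    by (subst sum.reindex[OF inj]) (simp add: o_def case_prod_unfold)
  also have "\<dots> = (\<Sum>x\<le>M. \<Sum>r\<in>compositions I (M - x). G (r(a := x)))"
    by (subst sum.Sigma) (auto simp: finite_compositions assms)
  finally show ?thesis .
qed

lemma negbin_monomial_moment:
  assumes "finite I" "\<forall>i\<in>I. \<beta> i > 0"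
  shows "\<exists>p. degree p \<le> sum m I \<and> (\<forall>M.
           (\<Sum>r\<in>compositions I M. \<Prod>i\<in>I. negbin (\<beta> i) (r i) * real (r i) ^ m i)
           = negbin (sum \<beta> I) M * poly p (real M))"
  using assms
proof (induction I rule: finite_induct)
  case empty
  show ?case
    by (intro exI[of _ 1]) (simp add: compositions_empty negbin_zero_param)
next
  case (insert a I)
  let ?F = "\<lambda>I r. \<Prod>i\<in>I. negbin (\<beta> i) (r i) * real (r i) ^ m i"
  obtain q where q: "degree q \<le> sum m I"
    "\<And>M. (\<Sum>r\<in>compositions I M. ?F I r) = negbin (sum \<beta> I) M * poly q (real M)"
    using insert by auto
  have pos: "\<beta> a + sum \<beta> I > 0"
    using insert.prems by (simp add: add_pos_nonneg sum_nonneg less_imp_le)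
  obtain P where P: "degree P \<le> m a + degree q"
    "\<And>M. (\<Sum>x\<le>M. negbin (\<beta> a) x * negbin (sum \<beta> I) (M - x)
                  * poly (monom 1 (m a)) (real x) * poly q (real (M - x)))
         = negbin (\<beta> a + sum \<beta> I) M * poly P (real M)"
    using negbin_poly_convolution[OF pos, of "monom 1 (m a)" q] by (auto simp: degree_monom_eq)
  have split: "?F (insert a I) (r(a := x)) = negbin (\<beta> a) x * real x ^ m a * ?F I r" for r x
  proof -
    have "?F I (r(a := x)) = ?F I r"
      by (rule prod.cong) (use insert.hyps in auto)
    then show ?thesis using insert.hyps by simp
  qed
  have "(\<Sum>r\<in>compositions (insert a I) M. ?F (insert a I) r)
        = negbin (sum \<beta> (insert a I)) M * poly P (real M)" for M
  proof -
    have "(\<Sum>r\<in>compositions (insert a I) M. ?F (insert a I) r)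
        = (\<Sum>x\<le>M. negbin (\<beta> a) x * real x ^ m a * (\<Sum>r\<in>compositions I (M - x). ?F I r))"
      unfolding sum_compositions_insert[OF insert.hyps(2,1)] split by (simp add: sum_distrib_left)
    also have "\<dots> = (\<Sum>x\<le>M. negbin (\<beta> a) x * negbin (sum \<beta> I) (M - x)
                  * poly (monom 1 (m a)) (real x) * poly q (real (M - x)))"
      by (simp add: q(2) poly_monom mult_ac)
    also have "\<dots> = negbin (sum \<beta> (insert a I)) M * poly P (real M)"
      using P(2) insert.hyps by simp
    finally show ?thesis .
  qed
  moreover have "degree P \<le> sum m (insert a I)"
    using P(1) q(1) insert.hyps by simp
  ultimately show ?case by blast
qed

section \<open>Weighted inner products, orthonormal bases and reproducing kernels\<close>

definition ip :: "'a set \<Rightarrow> ('a \<Rightarrow> real) \<Rightarrow> ('a \<Rightarrow> real) \<Rightarrow> ('a \<Rightarrow> real) \<Rightarrow> real" where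
  "ip S w f g = (\<Sum>r\<in>S. w r * f r * g r)"

definition orthonormal :: "'a set \<Rightarrow> ('a \<Rightarrow> real) \<Rightarrow> ('a \<Rightarrow> real) set \<Rightarrow> bool" where
  "orthonormal S w B \<longleftrightarrow> (\<forall>P\<in>B. \<forall>Q\<in>B. ip S w P Q = (if P = Q then 1 else 0))"

lemma ip_comm: "ip S w f g = ip S w g f"
  unfolding ip_def by (simp add: mult_ac)

lemma ip_cong:
  "(\<And>r. r \<in> S \<Longrightarrow> f r = f' r) \<Longrightarrow> (\<And>r. r \<in> S \<Longrightarrow> g r = g' r) \<Longrightarrow> ip S w f g = ip S w f' g'"
  unfolding ip_def by (rule sum.cong) auto

lemma ip_lin_left: "ip S w (\<lambda>r. a * f r + b * g r) h = a * ip S w f h + b * ip S w g h"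
  unfolding ip_def by (simp add: algebra_simps sum.distrib sum_distrib_left)

lemma ip_div_left: "ip S w (\<lambda>r. f r / c) g = ip S w f g / c"
  unfolding ip_def by (simp add: sum_divide_distrib)

lemma ip_div_right: "ip S w f (\<lambda>r. g r / c) = ip S w f g / c"
  unfolding ip_def by (simp add: sum_divide_distrib)

lemma ip_sum_left: "ip S w (\<lambda>r. \<Sum>P\<in>B. c P * P r) g = (\<Sum>P\<in>B. c P * ip S w P g)"
  unfolding ip_def by (simp add: sum_distrib_left sum_distrib_right sum.swap[of _ S] mult_ac)

lemma ip_self_nonneg: "(\<And>r. r \<in> S \<Longrightarrow> w r > 0) \<Longrightarrow> ip S w f f \<ge> 0"
  unfolding ip_def by (intro sum_nonneg) (simp add: mult.assoc less_imp_le)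

lemma ip_self_pos:
  assumes "finite S" "\<And>r. r \<in> S \<Longrightarrow> w r > 0" "r \<in> S" "f r \<noteq> 0"
  shows "ip S w f f > 0"
proof -
  have "f r * f r > 0" using assms(4) not_real_square_gt_zero by blast
  then have "w r * f r * f r > 0" using assms(2,3) by (simp add: mult.assoc)
  moreover have "w r * f r * f r \<le> ip S w f f"
    unfolding ip_def using assms by (intro member_le_sum) (simp_all add: mult.assoc less_imp_le)
  ultimately show ?thesis by linarith
qed

lemma orthonormal_coeff:
  assumes "finite B" "orthonormal S w B" "Q \<in> B"
  shows "(\<Sum>P\<in>B. c P * ip S w P Q) = c Q"
proof -
  have "(\<Sum>P\<in>B. c P * ip S w P Q) = (\<Sum>P\<in>B. if P = Q then c Q else 0)"
    using assms(2,3) unfolding orthonormal_def by (intro sum.cong) auto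
  then show ?thesis using assms(1,3) by simp
qed

lemma orthonormal_residual:
  assumes "finite B" "orthonormal S w B" "Q \<in> B"
  shows "ip S w (\<lambda>r. f r - (\<Sum>P\<in>B. ip S w f P * P r)) Q = 0"
proof -
  have "ip S w (\<lambda>r. f r - (\<Sum>P\<in>B. ip S w f P * P r)) Q
      = ip S w (\<lambda>r. 1 * f r + (-1) * (\<Sum>P\<in>B. ip S w f P * P r)) Q"
    by simp
  also have "\<dots> = ip S w f Q - (\<Sum>P\<in>B. ip S w f P * ip S w P Q)"
    by (simp only: ip_lin_left ip_sum_left)
  finally show ?thesis using orthonormal_coeff[OF assms] by simp
qed

lemma bessel:
  assumes "finite B" "orthonormal S w B" "\<And>r. r \<in> S \<Longrightarrow> w r > 0"
  shows "(\<Sum>P\<in>B. (ip S w e P)\<^sup>2) \<le> ip S w e e"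
proof -
  define h where "h r = e r - (\<Sum>P\<in>B. ip S w e P * P r)" for r
  have hP: "ip S w P h = 0" if "P \<in> B" for P
    unfolding ip_comm[of S w P] h_def[abs_def] by (rule orthonormal_residual[OF assms(1,2) that])
  have "ip S w h h = ip S w (\<lambda>r. 1 * e r + (-1) * (\<Sum>P\<in>B. ip S w e P * P r)) h"
    unfolding h_def by simp
  also have "\<dots> = ip S w e h"
    by (simp only: ip_lin_left ip_sum_left) (simp add: hP)
  also have "\<dots> = ip S w (\<lambda>r. 1 * e r + (-1) * (\<Sum>P\<in>B. ip S w e P * P r)) e"
    unfolding h_def by (subst ip_comm) simp
  also have "\<dots> = ip S w e e - (\<Sum>P\<in>B. ip S w e P * ip S w P e)"
    by (simp only: ip_lin_left ip_sum_left)
  also have "\<dots> = ip S w e e - (\<Sum>P\<in>B. (ip S w e P)\<^sup>2)"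
    by (intro arg_cong[where f="\<lambda>x. ip S w e e - x"] sum.cong refl) (metis ip_comm power2_eq_square)
  finally show ?thesis using ip_self_nonneg[of S w h, OF assms(3)] by simp
qed

text \<open>An orthonormal system of functions vanishing off S has at most card S elements: by
  Bessel's inequality applied to point indicators, sum_P w r * P r^2 <= 1 for every r in S.\<close>
lemma card_orthonormal:
  assumes "finite S" "\<And>r. r \<in> S \<Longrightarrow> w r > 0" "finite B" "orthonormal S w B"
  shows "card B \<le> card S"
proof -
  have local_bound: "(\<Sum>P\<in>B. w r * P r * P r) \<le> 1" if r: "r \<in> S" for r
  proof -
    define e where "e x = (if x = r then 1 else (0::real))" for x
    have eP: "ip S w e P = w r * P r" for P
    proof -
      have "ip S w e P = (\<Sum>x\<in>S. if x = r then w r * P r else 0)"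
        unfolding ip_def by (rule sum.cong) (auto simp: e_def)
      then show ?thesis using r assms(1) by simp
    qed
    have "(\<Sum>P\<in>B. (w r * P r)\<^sup>2) \<le> w r"
      using bessel[OF assms(3,4,2), of e] eP[of e] by (simp add: eP e_def)
    then have "w r * (\<Sum>P\<in>B. w r * P r * P r) \<le> w r * 1"
      by (simp add: sum_distrib_left power2_eq_square mult_ac)
    then show ?thesis using assms(2)[OF r] by simp
  qed
  have "real (card B) = (\<Sum>P\<in>B. ip S w P P)"
    using assms(4) unfolding orthonormal_def by simp
  also have "\<dots> = (\<Sum>r\<in>S. \<Sum>P\<in>B. w r * P r * P r)"
    unfolding ip_def by (rule sum.swap)
  also have "\<dots> \<le> (\<Sum>r\<in>S. 1)" by (rule sum_mono) (rule local_bound)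
  finally show ?thesis by simp
qed

lemma orthonormal_extend:
  assumes S: "finite S" and wpos: "\<And>r. r \<in> S \<Longrightarrow> w r > 0"
    and B: "orthonormal S w B" and hB: "\<And>Q. Q \<in> B \<Longrightarrow> ip S w h Q = 0"
    and r0: "r0 \<in> S" "h r0 \<noteq> 0"
  defines "h' \<equiv> \<lambda>r. h r / sqrt (ip S w h h)"
  shows "orthonormal S w (insert h' B)" and "h' \<notin> B"
proof -
  define \<nu> where "\<nu> = sqrt (ip S w h h)"
  have pos: "ip S w h h > 0" by (rule ip_self_pos[of S w r0 h, OF S wpos r0])
  have h'Q: "ip S w h' Q = 0" if "Q \<in> B" for Q
    unfolding h'_def \<nu>_def[symmetric] by (simp add: ip_div_left hB[OF that])
  have "ip S w h' h' = ip S w h h / \<nu> / \<nu>"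
    unfolding h'_def \<nu>_def[symmetric] by (simp add: ip_div_left ip_div_right)
  then have h'h': "ip S w h' h' = 1" using pos unfolding \<nu>_def by simp
  then show notin: "h' \<notin> B" using h'Q by force
  have "ip S w Q h' = 0" if "Q \<in> B" for Q
    using h'Q[OF that] ip_comm[of S w Q h'] by simp
  then show "orthonormal S w (insert h' B)"
    using B h'Q h'h' notin unfolding orthonormal_def by auto
qed

lemma lincomb_closed:
  fixes V :: "('a \<Rightarrow> real) \<Rightarrow> bool"
  assumes V0: "V (\<lambda>_. 0)" and Vlin: "\<And>f g a b. V f \<Longrightarrow> V g \<Longrightarrow> V (\<lambda>r. a * f r + b * g r)"
    and "finite I" "\<forall>i\<in>I. V (F i)"
  shows "V (\<lambda>r. \<Sum>i\<in>I. c i * F i r)"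
  using assms(3,4)
proof (induction I rule: finite_induct)
  case empty
  then show ?case using V0 by simp
next
  case (insert i I)
  have "V (\<lambda>r. c i * F i r + 1 * (\<Sum>i\<in>I. c i * F i r))"
    using insert by (intro Vlin) auto
  then show ?case using insert by simp
qed

text \<open>A maximal orthonormal system B in a space V of functions on a finite set S (closed
  under linear combinations and under changing values off S) spans V: otherwise the residual
  of some f in V is nonzero on S, and normalising it extends B (Gram-Schmidt step).\<close>
lemma maximal_orthonormal_spans:
  assumes S: "finite S" and wpos: "\<And>r. r \<in> S \<Longrightarrow> w r > 0"
    and V0: "V (\<lambda>_. 0)"
    and Vlin: "\<And>f g a b. V f \<Longrightarrow> V g \<Longrightarrow> V (\<lambda>r. a * f r + b * g r)"
    and Vcong: "\<And>f g. V f \<Longrightarrow> (\<And>r. r \<in> S \<Longrightarrow> f r = g r) \<Longrightarrow> V g"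
    and finB: "finite B" and VB: "\<forall>P\<in>B. V P" and oB: "orthonormal S w B"
    and maximal: "\<And>h. V h \<Longrightarrow> (\<forall>r. r \<notin> S \<longrightarrow> h r = 0) \<Longrightarrow> orthonormal S w (insert h B) \<Longrightarrow> h \<in> B"
    and Vf: "V f"
  shows "\<exists>c. \<forall>r\<in>S. f r = (\<Sum>P\<in>B. c P * P r)"
proof -
  define c where "c P = ip S w f P" for P
  define h where "h r = (if r \<in> S then f r - (\<Sum>P\<in>B. c P * P r) else 0)" for r
  have "V (\<lambda>r. 1 * f r + (-1) * (\<Sum>P\<in>B. c P * P r))"
    by (intro Vlin Vf lincomb_closed[where F="\<lambda>P. P", OF V0 Vlin finB] VB)
  then have Vh: "V h" by (rule Vcong) (simp add: h_def)
  have hB: "ip S w h Q = 0" if "Q \<in> B" for Q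
  proof -
    have "ip S w h Q = ip S w (\<lambda>r. f r - (\<Sum>P\<in>B. ip S w f P * P r)) Q"
      by (rule ip_cong) (auto simp: h_def c_def)
    then show ?thesis using orthonormal_residual[OF finB oB that] by simp
  qed
  have "h r = 0" if "r \<in> S" for r
  proof (rule ccontr)
    assume "h r \<noteq> 0"
    define h' where "h' = (\<lambda>r. h r / sqrt (ip S w h h))"
    have ext: "orthonormal S w (insert h' B)" "h' \<notin> B"
      using orthonormal_extend[OF S wpos oB hB \<open>r \<in> S\<close> \<open>h r \<noteq> 0\<close>] by (simp_all add: h'_def)
    have "V h'"
      using Vlin[OF Vh Vh, of "1 / sqrt (ip S w h h)" 0] by (rule Vcong) (simp add: h'_def)
    moreover have "\<forall>r. r \<notin> S \<longrightarrow> h' r = 0" by (simp add: h'_def h_def)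
    ultimately have "h' \<in> B" using ext(1) by (rule maximal)
    then show False using ext(2) by contradiction
  qed
  then show ?thesis by (intro exI[of _ c]) (auto simp: h_def)
qed

text \<open>Existence of an orthonormal basis of such a space: an orthonormal system of maximal
  cardinality exists by the bound card B <= card S, and it is maximal for inclusion.\<close>
lemma orthonormal_basis_exists:
  assumes S: "finite S" and wpos: "\<And>r. r \<in> S \<Longrightarrow> w r > 0"
    and V0: "V (\<lambda>_. 0)"
    and Vlin: "\<And>f g a b. V f \<Longrightarrow> V g \<Longrightarrow> V (\<lambda>r. a * f r + b * g r)"
    and Vcong: "\<And>f g. V f \<Longrightarrow> (\<And>r. r \<in> S \<Longrightarrow> f r = g r) \<Longrightarrow> V g"
  shows "\<exists>B. finite B \<and> (\<forall>P\<in>B. V P \<and> (\<forall>r. r \<notin> S \<longrightarrow> P r = 0)) \<and> orthonormal S w B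
     \<and> (\<forall>f. V f \<longrightarrow> (\<exists>c. \<forall>r\<in>S. f r = (\<Sum>P\<in>B. c P * P r)))"
proof -
  define Ok where
    "Ok B \<longleftrightarrow> finite B \<and> (\<forall>P\<in>B. V P \<and> (\<forall>r. r \<notin> S \<longrightarrow> P r = 0)) \<and> orthonormal S w B" for B
  have "\<exists>k. (\<exists>B. Ok B \<and> card B = k) \<and> (\<forall>k'. (\<exists>B. Ok B \<and> card B = k') \<longrightarrow> k' \<le> k)"
  proof (rule Nat.ex_has_greatest_nat[of _ 0 "card S"])
    show "\<exists>B. Ok B \<and> card B = 0"
      by (intro exI[of _ "{}"]) (simp add: Ok_def orthonormal_def)
    show "\<forall>k. (\<exists>B. Ok B \<and> card B = k) \<longrightarrow> k \<le> card S"
      using card_orthonormal[OF S wpos] by (auto simp: Ok_def)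
  qed
  then obtain B where B: "Ok B" and largest: "\<And>B'. Ok B' \<Longrightarrow> card B' \<le> card B"
    by blast
  have finB: "finite B" and VB: "\<forall>P\<in>B. V P" and oB: "orthonormal S w B"
    using B unfolding Ok_def by blast+
  have maximal: "h \<in> B"
    if Vh: "V h" and zh: "\<forall>r. r \<notin> S \<longrightarrow> h r = 0" and oh: "orthonormal S w (insert h B)" for h
  proof (rule ccontr)
    assume "h \<notin> B"
    have "Ok (insert h B)" using B Vh zh oh unfolding Ok_def by blast
    then have "card (insert h B) \<le> card B" by (rule largest)
    then show False using \<open>h \<notin> B\<close> finB by simp
  qed
  have "\<exists>c. \<forall>r\<in>S. f r = (\<Sum>P\<in>B. c P * P r)" if Vf: "V f" for f
    by (rule maximal_orthonormal_spans[where V=V and S=S and w=w and B=B and f=f,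
          OF S wpos V0 Vlin Vcong finB VB oB maximal Vf])
  then show ?thesis using B unfolding Ok_def by blast
qed

lemma kernel_reproduces:
  assumes "finite B" "orthonormal S w B" "V h"
    and span: "\<forall>f. V f \<longrightarrow> (\<exists>c. \<forall>r\<in>S. f r = (\<Sum>P\<in>B. c P * P r))"
    and v: "v \<in> S"
  shows "ip S w (\<lambda>r. \<Sum>P\<in>B. P v * P r) h = h v"
proof -
  obtain c where c: "\<forall>r\<in>S. h r = (\<Sum>P\<in>B. c P * P r)" using span assms(3) by blast
  have cQ: "ip S w Q h = c Q" if "Q \<in> B" for Q
  proof -
    have "ip S w Q h = ip S w (\<lambda>r. \<Sum>P\<in>B. c P * P r) Q"
      by (subst ip_comm, rule ip_cong) (auto simp: c)
    also have "\<dots> = c Q" by (simp add: ip_sum_left orthonormal_coeff[OF assms(1,2) that])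
    finally show ?thesis .
  qed
  have "ip S w (\<lambda>r. \<Sum>P\<in>B. P v * P r) h = (\<Sum>P\<in>B. P v * c P)"
    by (simp add: ip_sum_left cQ)
  also have "\<dots> = h v" using c v by (simp add: mult.commute)
  finally show ?thesis .
qed

lemma kernel_unique:
  assumes "finite B" "orthonormal S w B" "V u"
    and span: "\<forall>f. V f \<longrightarrow> (\<exists>c. \<forall>r\<in>S. f r = (\<Sum>P\<in>B. c P * P r))"
    and rep: "\<And>P. P \<in> B \<Longrightarrow> ip S w u P = P v"
    and s: "s \<in> S"
  shows "u s = (\<Sum>P\<in>B. P s * P v)"
proof -
  obtain c where c: "\<forall>r\<in>S. u r = (\<Sum>P\<in>B. c P * P r)" using span assms(3) by blast
  have "c Q = Q v" if "Q \<in> B" for Q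
  proof -
    have "ip S w u Q = ip S w (\<lambda>r. \<Sum>P\<in>B. c P * P r) Q" by (rule ip_cong) (auto simp: c)
    also have "\<dots> = c Q" by (simp add: ip_sum_left orthonormal_coeff[OF assms(1,2) that])
    finally show ?thesis using rep[OF that] by simp
  qed
  then show ?thesis using c s by (simp add: mult.commute)
qed

section \<open>The Dirichlet-multinomial inner product and the Hahn kernel\<close>

lemma simplex_compositions: "simplex d N = compositions {..<d} N"
  unfolding simplex_def compositions_def by auto

lemma finite_simplex: "finite (simplex d N)"
  by (simp add: simplex_compositions finite_compositions)

lemma inner_DM_ip: "inner_DM d \<beta> N = ip (simplex d N) (DM d \<beta> N)"
  unfolding inner_DM_def[abs_def] ip_def by simp

lemma DM_negbin: "DM d \<beta> N r = fact N / pochhammer (vabs d \<beta>) N * (\<Prod>i<d. negbin (\<beta> i) (r i))"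
  unfolding DM_def negbin_def prod_dividef by (simp only: divide_inverse mult_ac)

lemma DM_pos:
  assumes "\<forall>i<d. \<beta> i > 0" "vabs d \<beta> > 0"
  shows "DM d \<beta> N r > 0"
  unfolding DM_negbin using assms
  by (intro mult_pos_pos divide_pos_pos prod_pos) (auto simp: negbin_pos pochhammer_pos)

lemma polyfun_cong:
  "polyfun d N n f \<Longrightarrow> (\<And>r. r \<in> simplex d N \<Longrightarrow> f r = g r) \<Longrightarrow> polyfun d N n g"
  unfolding polyfun_def by metis

lemma polyfun_0: "polyfun d N n (\<lambda>_. 0)"
  unfolding polyfun_def by (intro exI[of _ "\<lambda>_. 0"]) simp

lemma polyfun_lin:
  assumes "polyfun d N n f" "polyfun d N n g"
  shows "polyfun d N n (\<lambda>r. a * f r + b * g r)"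
proof -
  obtain c1 c2 where
    "\<forall>r\<in>simplex d N. f r = (\<Sum>m\<in>exps d n. c1 m * (\<Prod>i<d. real (r i) ^ m i))"
    "\<forall>r\<in>simplex d N. g r = (\<Sum>m\<in>exps d n. c2 m * (\<Prod>i<d. real (r i) ^ m i))"
    using assms unfolding polyfun_def by blast
  then show ?thesis
    unfolding polyfun_def
    by (intro exI[of _ "\<lambda>m. a * c1 m + b * c2 m"])
       (simp add: sum.distrib sum_distrib_left distrib_right mult_ac)
qed

lemma Vspace_0: "Vspace d \<beta> N n (\<lambda>_. 0)"
  unfolding Vspace_def inner_DM_def by (simp add: polyfun_0)

lemma Vspace_lin:
  assumes "Vspace d \<beta> N n f" "Vspace d \<beta> N n g"
  shows "Vspace d \<beta> N n (\<lambda>r. a * f r + b * g r)"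
  using assms unfolding Vspace_def inner_DM_ip by (simp add: polyfun_lin ip_lin_left)

lemma Vspace_cong:
  assumes "Vspace d \<beta> N n f" "\<And>r. r \<in> simplex d N \<Longrightarrow> f r = g r"
  shows "Vspace d \<beta> N n g"
proof -
  have "polyfun d N n g" using assms polyfun_cong unfolding Vspace_def by blast
  moreover have "inner_DM d \<beta> N g h = inner_DM d \<beta> N f h" for h
    unfolding inner_DM_ip by (rule ip_cong) (auto simp: assms(2))
  ultimately show ?thesis using assms(1) unfolding Vspace_def by simp
qed

text \<open>For positive parameters the Hahn kernel is built from a genuine orthonormal basis.\<close>
lemma is_ONB_hahn_basis:
  assumes "\<forall>i<d. \<beta> i > 0" "vabs d \<beta> > 0"
  shows "is_ONB d \<beta> N n (SOME B. is_ONB d \<beta> N n B)"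
proof (rule someI_ex)
  have "\<exists>B. finite B \<and> (\<forall>P\<in>B. Vspace d \<beta> N n P \<and> (\<forall>r. r \<notin> simplex d N \<longrightarrow> P r = 0))
     \<and> orthonormal (simplex d N) (DM d \<beta> N) B
     \<and> (\<forall>f. Vspace d \<beta> N n f \<longrightarrow> (\<exists>c. \<forall>r\<in>simplex d N. f r = (\<Sum>P\<in>B. c P * P r)))"
    by (rule orthonormal_basis_exists)
       (use DM_pos[OF assms] in \<open>auto intro: finite_simplex Vspace_0 Vspace_lin Vspace_cong\<close>)
  then show "\<exists>B. is_ONB d \<beta> N n B"
    unfolding is_ONB_def orthonormal_def inner_DM_ip by blast
qed

lemma is_ONB_props:
  assumes "is_ONB d \<beta> N n B"
  shows "finite B" "\<forall>P\<in>B. Vspace d \<beta> N n P" "orthonormal (simplex d N) (DM d \<beta> N) B"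
    "\<forall>f. Vspace d \<beta> N n f \<longrightarrow> (\<exists>c. \<forall>r\<in>simplex d N. f r = (\<Sum>P\<in>B. c P * P r))"
  using assms unfolding is_ONB_def orthonormal_def inner_DM_ip by auto

lemma hahn_kernel_Vspace:
  assumes "\<forall>i<d. \<beta> i > 0" "vabs d \<beta> > 0"
  shows "Vspace d \<beta> N n (\<lambda>r. hahn_kernel d \<beta> N n r v)"
proof -
  note B = is_ONB_props[OF is_ONB_hahn_basis[OF assms, of N n]]
  have "Vspace d \<beta> N n (\<lambda>r. \<Sum>P\<in>(SOME B. is_ONB d \<beta> N n B). P v * P r)"
    by (rule lincomb_closed[where V="Vspace d \<beta> N n" and F="\<lambda>P. P", OF Vspace_0 Vspace_lin B(1,2)])
  then show ?thesis
    unfolding hahn_kernel_def Let_def by (simp add: mult.commute)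
qed

lemma hahn_kernel_reproduces:
  assumes "\<forall>i<d. \<beta> i > 0" "vabs d \<beta> > 0" "v \<in> simplex d N" "Vspace d \<beta> N n F"
  shows "inner_DM d \<beta> N (\<lambda>r. hahn_kernel d \<beta> N n r v) F = F v"
proof -
  note B = is_ONB_props[OF is_ONB_hahn_basis[OF assms(1,2), of N n]]
  show ?thesis
    unfolding hahn_kernel_def Let_def inner_DM_ip
    by (subst mult.commute, rule kernel_reproduces[OF B(1,3) assms(4) B(4) assms(3)])
qed

lemma hahn_kernel_unique:
  assumes "\<forall>i<d. \<beta> i > 0" "vabs d \<beta> > 0" "Vspace d \<beta> N n g"
    and "\<And>P. Vspace d \<beta> N n P \<Longrightarrow> inner_DM d \<beta> N g P = P v" and "s \<in> simplex d N"
  shows "hahn_kernel d \<beta> N n s v = g s"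
proof -
  note B = is_ONB_props[OF is_ONB_hahn_basis[OF assms(1,2), of N n]]
  show ?thesis
    unfolding hahn_kernel_def Let_def
    using kernel_unique[OF B(1,3) assms(3) B(4) _ assms(5)] assms(4) B(2)
    by (simp add: inner_DM_ip)
qed

section \<open>Polynomial functions on the simplex\<close>

lemma finite_exps: "finite (exps d n)"
proof (rule finite_subset)
  show "exps d n \<subseteq> (\<Union>t\<le>n. compositions {..<d} t)"
    unfolding exps_def compositions_def by auto
qed (simp add: finite_compositions)

lemma polyfun_coord_power:
  assumes "j < d" "t \<le> n"
  shows "polyfun d N n (\<lambda>r. real (r j) ^ t)"
proof -
  define e where "e = (\<lambda>i. if i = j then t else (0::nat))"
  have e: "e \<in> exps d n" using assms unfolding exps_def e_def by (auto simp: sum.delta)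
  have "(\<Sum>m\<in>exps d n. (if m = e then 1 else 0) * (\<Prod>i<d. real (r i) ^ m i)) = real (r j) ^ t" for r
  proof -
    have "(\<Prod>i<d. real (r i) ^ e i) = (\<Prod>i<d. if i = j then real (r j) ^ t else 1)"
      by (rule prod.cong) (auto simp: e_def)
    moreover have "(\<Sum>m\<in>exps d n. (if m = e then 1 else 0) * (\<Prod>i<d. real (r i) ^ m i))
        = (\<Sum>m\<in>exps d n. if m = e then (\<Prod>i<d. real (r i) ^ m i) else 0)"
      by (rule sum.cong) auto
    ultimately show ?thesis using e assms(1) by (simp add: sum.delta[OF finite_exps])
  qed
  then show ?thesis unfolding polyfun_def by (intro exI[of _ "\<lambda>m. if m = e then 1 else 0"]) simp
qed

lemma polyfun_coord_poly:
  assumes "j < d" "degree q \<le> n"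
  shows "polyfun d N n (\<lambda>r. poly q (real (r j)))"
proof -
  have "polyfun d N n (\<lambda>r. \<Sum>t\<le>k. coeff q t * real (r j) ^ t)" if "k \<le> n" for k
    using that
  proof (induction k)
    case 0
    then show ?case
      using polyfun_lin[OF polyfun_0 polyfun_coord_power[OF assms(1), of 0], where a=0 and b="coeff q 0"] by simp
  next
    case (Suc k)
    then show ?case
      using polyfun_lin[OF _ polyfun_coord_power[OF assms(1) Suc.prems], where a=1 and b="coeff q (Suc k)"]
      by simp
  qed
  from this[OF assms(2)] show ?thesis by (simp add: poly_altdef)
qed

lemma pt2_simplex: "k \<le> N \<Longrightarrow> pt2 N k \<in> simplex 2 N"
  unfolding simplex_def pt2_def by (simp add: numeral_2_eq_2)

lemma simplex2_le: "r \<in> simplex 2 N \<Longrightarrow> r 0 \<le> N"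
  unfolding simplex_def by (auto simp: numeral_2_eq_2)

lemma pt2_inv: "r \<in> simplex 2 N \<Longrightarrow> pt2 N (r 0) = r"
proof -
  assume "r \<in> simplex 2 N"
  then have "r 0 + r 1 = N" "\<forall>i\<ge>2. r i = 0" unfolding simplex_def by (auto simp: numeral_2_eq_2)
  then show "pt2 N (r 0) = r" unfolding pt2_def by (auto simp: fun_eq_iff)
qed

lemma sum_simplex2: "(\<Sum>r\<in>simplex 2 N. G r) = (\<Sum>k\<le>N. G (pt2 N k))"
  by (rule sum.reindex_bij_witness[where i="pt2 N" and j="\<lambda>r. r 0"])
     (auto simp: pt2_inv simplex2_le pt2_simplex, simp add: pt2_def)

lemma polyfun2_univar:
  assumes "polyfun 2 N n h"
  obtains q where "degree q \<le> n" "\<And>r. r \<in> simplex 2 N \<Longrightarrow> h r = poly q (real (r 0))"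
proof -
  obtain c where c: "\<forall>r\<in>simplex 2 N. h r = (\<Sum>m\<in>exps 2 n. c m * (\<Prod>i<2. real (r i) ^ m i))"
    using assms unfolding polyfun_def by blast
  define q where "q = (\<Sum>m\<in>exps 2 n. smult (c m) (monom 1 (m 0) * [:real N, -1:] ^ (m 1)))"
  have "degree q \<le> n"
    unfolding q_def
  proof (rule degree_sum_le[OF finite_exps])
    fix m assume "m \<in> exps 2 n"
    then have mn: "m 0 + m 1 \<le> n" unfolding exps_def by (simp add: numeral_2_eq_2)
    have "degree (monom (1::real) (m 0) * [:real N, -1:] ^ (m 1)) \<le> m 0 + m 1 * 1"
      by (rule order_trans[OF degree_mult_le], rule add_mono[OF degree_monom_le],
          rule order_trans[OF degree_power_le]) simp
    then show "degree (smult (c m) (monom 1 (m 0) * [:real N, -1:] ^ (m 1))) \<le> n"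
      using mn degree_smult_le order_trans by fastforce
  qed
  moreover have "h r = poly q (real (r 0))" if r: "r \<in> simplex 2 N" for r
  proof -
    have "r 1 = N - r 0" using r unfolding simplex_def by (auto simp: numeral_2_eq_2)
    then have "h r = (\<Sum>m\<in>exps 2 n. c m * (real (r 0) ^ m 0 * (real N - real (r 0)) ^ m 1))"
      using c r simplex2_le[OF r] by (simp add: numeral_2_eq_2 of_nat_diff)
    then show ?thesis unfolding q_def poly_sum by (simp add: poly_monom)
  qed
  ultimately show ?thesis using that by blast
qed

section \<open>Marginals along one coordinate\<close>

text \<open>Lumping all types other than j: the parameter of the resulting two-type
  Dirichlet-multinomial law of the pair (s j, N - s j).\<close>
definition lumped :: "nat \<Rightarrow> (nat \<Rightarrow> real) \<Rightarrow> nat \<Rightarrow> nat \<Rightarrow> real" where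
  "lumped d \<alpha> j = (\<lambda>i. if i = 0 then \<alpha> j else vabs d \<alpha> - \<alpha> j)"

lemma vabs_minus: "j < d \<Longrightarrow> vabs d \<alpha> - \<alpha> j = sum \<alpha> ({..<d} - {j})"
  unfolding vabs_def by (simp add: sum_diff1)

lemma vabs_lumped: "vabs 2 (lumped d \<alpha> j) = vabs d \<alpha>"
  unfolding lumped_def vabs_def by (simp add: numeral_2_eq_2)

lemma vabs_pos: "0 < d \<Longrightarrow> \<forall>i<d. \<alpha> i > 0 \<Longrightarrow> vabs d \<alpha> > 0"
  unfolding vabs_def by (intro sum_pos) auto

lemma lumped_pos:
  assumes "2 \<le> d" "\<forall>i<d. \<alpha> i > 0" "j < d"
  shows "\<forall>i<2. lumped d \<alpha> j i > 0"
proof -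
  obtain i where i: "i < d" "i \<noteq> j"
  proof (cases "j = 0")
    case True
    then show ?thesis using assms(1) that[of 1] by simp
  next
    case False
    then show ?thesis using assms(1) that[of 0] by simp
  qed
  have "sum \<alpha> ({..<d} - {j}) > 0" using i assms(2) by (intro sum_pos) auto
  then show ?thesis using assms(2,3) vabs_minus[OF assms(3)] by (auto simp: lumped_def)
qed

lemma DM_lumped:
  assumes "k \<le> N"
  shows "DM 2 (lumped d \<alpha> j) N (pt2 N k)
       = fact N / pochhammer (vabs d \<alpha>) N * (negbin (\<alpha> j) k * negbin (vabs d \<alpha> - \<alpha> j) (N - k))"
  using assms unfolding DM_negbin vabs_lumped by (simp add: lumped_def numeral_2_eq_2 pt2_def)

definition fiber_sum ::
    "nat \<Rightarrow> (nat \<Rightarrow> real) \<Rightarrow> nat \<Rightarrow> nat \<Rightarrow> ((nat \<Rightarrow> nat) \<Rightarrow> real) \<Rightarrow> nat \<Rightarrow> real" where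
  "fiber_sum d \<alpha> N j f k
     = (\<Sum>r\<in>compositions ({..<d} - {j}) (N - k). DM d \<alpha> N (r(j := k)) * f (r(j := k)))"

lemma fiber_point_in_simplex:
  assumes "j < d" "r \<in> compositions ({..<d} - {j}) (N - k)" "k \<le> N"
  shows "r(j := k) \<in> simplex d N"
proof -
  have split: "{..<d} = insert j ({..<d} - {j})" using assms(1) by auto
  show ?thesis
    unfolding simplex_compositions by (subst split, subst compositions_insert) (use assms in auto)
qed

lemma sum_simplex_fibers:
  assumes "j < d"
  shows "(\<Sum>r\<in>simplex d N. G r) = (\<Sum>k\<le>N. \<Sum>r\<in>compositions ({..<d} - {j}) (N - k). G (r(j := k)))"
proof -
  have split: "{..<d} = insert j ({..<d} - {j})" using assms by auto
  show ?thesis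
    unfolding simplex_compositions by (subst split, rule sum_compositions_insert) auto
qed

lemma fiber_sum_vertex:
  "fiber_sum d \<alpha> N j f N = DM d \<alpha> N (\<lambda>i. if i = j then N else 0) * f (\<lambda>i. if i = j then N else 0)"
proof -
  have "(\<lambda>_. 0::nat)(j := N) = (\<lambda>i. if i = j then N else 0)" by auto
  then show ?thesis unfolding fiber_sum_def by (simp add: compositions_of_zero)
qed

text \<open>f has a polynomial marginal of degree n along coordinate j if, on each fiber s j = k,
  its weighted sum is the lumped two-type weight of k times a polynomial of degree at most n
  in k; equivalently, the conditional expectation of f given s j is such a polynomial.\<close>
definition poly_marginal :: "nat \<Rightarrow> (nat \<Rightarrow> real) \<Rightarrow> nat \<Rightarrow> nat \<Rightarrow> nat \<Rightarrow> ((nat \<Rightarrow> nat) \<Rightarrow> real)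
    \<Rightarrow> real poly \<Rightarrow> bool" where
  "poly_marginal d \<alpha> N j n f p \<longleftrightarrow> degree p \<le> n \<and>
     (\<forall>k\<le>N. fiber_sum d \<alpha> N j f k = DM 2 (lumped d \<alpha> j) N (pt2 N k) * poly p (real k))"

text \<open>Monomials have polynomial marginals: by the multinomial moment formula, summing the
  monomial over the other coordinates leaves the weight of N - k times a polynomial in N - k.\<close>
lemma poly_marginal_monomial:
  assumes j: "j < d" and pos: "\<forall>i<d. \<alpha> i > 0"
  shows "\<exists>p. poly_marginal d \<alpha> N j (sum m {..<d}) (\<lambda>r. \<Prod>i<d. real (r i) ^ m i) p"
proof -
  define I where "I = {..<d} - {j}"
  have I: "finite I" "j \<notin> I" "{..<d} = insert j I" using j by (auto simp: I_def)
  let ?F = "\<lambda>r. \<Prod>i\<in>I. negbin (\<alpha> i) (r i) * real (r i) ^ m i"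
  obtain q where q: "degree q \<le> sum m I"
    "\<And>M. (\<Sum>r\<in>compositions I M. ?F r) = negbin (sum \<alpha> I) M * poly q (real M)"
    using negbin_monomial_moment[OF I(1), of \<alpha> m] pos by (auto simp: I_def)
  define C where "C = fact N / pochhammer (vabs d \<alpha>) N"
  define p where "p = monom 1 (m j) * pcompose q [:real N, -1:]"
  have "degree p \<le> m j + degree q * 1"
    unfolding p_def
    by (rule order_trans[OF degree_mult_le], rule add_mono[OF degree_monom_le],
        rule order_trans[OF degree_pcompose_le]) simp
  then have "degree p \<le> sum m {..<d}" using q(1) I by simp
  moreover have "fiber_sum d \<alpha> N j (\<lambda>r. \<Prod>i<d. real (r i) ^ m i) k
     = DM 2 (lumped d \<alpha> j) N (pt2 N k) * poly p (real k)" if k: "k \<le> N" for k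
  proof -
    have split: "DM d \<alpha> N (r(j := k)) * (\<Prod>i<d. real ((r(j := k)) i) ^ m i)
        = C * (negbin (\<alpha> j) k * real k ^ m j) * ?F r" for r
    proof -
      have "?F (r(j := k)) = ?F r" by (rule prod.cong) (use I in auto)
      then show ?thesis
        unfolding DM_negbin C_def I(3) using I by (simp add: prod.distrib mult_ac)
    qed
    have "fiber_sum d \<alpha> N j (\<lambda>r. \<Prod>i<d. real (r i) ^ m i) k
        = C * (negbin (\<alpha> j) k * real k ^ m j) * (\<Sum>r\<in>compositions I (N - k). ?F r)"
      unfolding fiber_sum_def I_def[symmetric] split by (simp add: sum_distrib_left)
    also have "\<dots> = DM 2 (lumped d \<alpha> j) N (pt2 N k) * poly p (real k)"
      unfolding q(2) DM_lumped[OF k] vabs_minus[OF j] I_def[symmetric] using k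
      by (simp add: C_def p_def poly_pcompose poly_monom of_nat_diff mult_ac)
    finally show ?thesis .
  qed
  ultimately show ?thesis unfolding poly_marginal_def by blast
qed

lemma fiber_sum_cong:
  assumes "j < d" "k \<le> N" "\<And>r. r \<in> simplex d N \<Longrightarrow> f r = g r"
  shows "fiber_sum d \<alpha> N j f k = fiber_sum d \<alpha> N j g k"
  unfolding fiber_sum_def using assms fiber_point_in_simplex by (intro sum.cong) auto

lemma fiber_sum_lin:
  "fiber_sum d \<alpha> N j (\<lambda>r. a * f r + b * g r) k = a * fiber_sum d \<alpha> N j f k + b * fiber_sum d \<alpha> N j g k"
  unfolding fiber_sum_def by (simp add: algebra_simps sum.distrib sum_distrib_left)

lemma poly_marginal_polyfun:
  assumes j: "j < d" and pos: "\<forall>i<d. \<alpha> i > 0" and f: "polyfun d N n f"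
  obtains p where "poly_marginal d \<alpha> N j n f p"
proof -
  let ?V = "\<lambda>f. \<exists>p. poly_marginal d \<alpha> N j n f p"
  have V0: "?V (\<lambda>_. 0)"
    by (intro exI[of _ 0]) (simp add: poly_marginal_def fiber_sum_def)
  have Vlin: "?V (\<lambda>r. a * f r + b * g r)" if fV: "?V f" and gV: "?V g" for f g a b
  proof -
    obtain p q where "poly_marginal d \<alpha> N j n f p" "poly_marginal d \<alpha> N j n g q"
      using fV gV by blast
    then show ?thesis
      unfolding poly_marginal_def fiber_sum_lin
      by (intro exI[of _ "smult a p + smult b q"])
         (auto intro: degree_add_le order_trans[OF degree_smult_le] simp: algebra_simps)
  qed
  obtain c where c: "\<forall>r\<in>simplex d N. f r = (\<Sum>m\<in>exps d n. c m * (\<Prod>i<d. real (r i) ^ m i))"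
    using f unfolding polyfun_def by blast
  have "?V (\<lambda>r. \<Prod>i<d. real (r i) ^ m i)" if m: "m \<in> exps d n" for m
  proof -
    obtain p where "poly_marginal d \<alpha> N j (sum m {..<d}) (\<lambda>r. \<Prod>i<d. real (r i) ^ m i) p"
      using poly_marginal_monomial[OF j pos] by blast
    moreover have "sum m {..<d} \<le> n" using m unfolding exps_def by simp
    ultimately have "poly_marginal d \<alpha> N j n (\<lambda>r. \<Prod>i<d. real (r i) ^ m i) p"
      unfolding poly_marginal_def by simp
    then show ?thesis by blast
  qed
  then have "?V (\<lambda>r. \<Sum>m\<in>exps d n. c m * (\<Prod>i<d. real (r i) ^ m i))"
    by (intro lincomb_closed[where V="?V", OF V0 Vlin finite_exps]) auto
  then obtain p where p: "poly_marginal d \<alpha> N j n (\<lambda>r. \<Sum>m\<in>exps d n. c m * (\<Prod>i<d. real (r i) ^ m i)) p"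
    by blast
  have "poly_marginal d \<alpha> N j n f p"
    using p fiber_sum_cong[OF j _ c[rule_format, symmetric]] unfolding poly_marginal_def by simp
  then show ?thesis by (rule that)
qed

text \<open>Transfer of inner products: testing f against a function of the coordinate s j only
  sees the marginal of f, so the d-dimensional inner product becomes a two-type one.\<close>
lemma inner_DM_coord:
  assumes j: "j < d" and p: "poly_marginal d \<alpha> N j n f p"
  shows "inner_DM d \<alpha> N (\<lambda>r. h (r j)) f
       = inner_DM 2 (lumped d \<alpha> j) N (\<lambda>r. h (r 0)) (\<lambda>r. poly p (real (r 0)))"
proof -
  have "inner_DM d \<alpha> N (\<lambda>r. h (r j)) f = (\<Sum>k\<le>N. h k * fiber_sum d \<alpha> N j f k)"
    unfolding inner_DM_def sum_simplex_fibers[OF j] fiber_sum_def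
    by (simp add: sum_distrib_left mult_ac)
  also have "\<dots> = (\<Sum>k\<le>N. h k * (DM 2 (lumped d \<alpha> j) N (pt2 N k) * poly p (real k)))"
    using p unfolding poly_marginal_def by simp
  also have "\<dots> = inner_DM 2 (lumped d \<alpha> j) N (\<lambda>r. h (r 0)) (\<lambda>r. poly p (real (r 0)))"
    unfolding inner_DM_def sum_simplex2 by (simp add: pt2_def mult_ac)
  finally show ?thesis .
qed

section \<open>Lifting the two-type kernel\<close>

lemma simplex_coord_le: "s \<in> simplex d N \<Longrightarrow> j < d \<Longrightarrow> s j \<le> N"
  unfolding simplex_def using member_le_sum[of j "{..<d}" s] by auto

lemma DM_vertex:
  assumes "j < d"
  shows "DM d \<alpha> N (\<lambda>i. if i = j then N else 0) = DM 2 (lumped d \<alpha> j) N (pt2 N N)"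
proof -
  have "(\<Prod>i<d. negbin (\<alpha> i) (if i = j then N else 0)) = (\<Prod>i<d. if i = j then negbin (\<alpha> j) N else 1)"
    by (rule prod.cong) auto
  also have "\<dots> = negbin (\<alpha> j) N" using assms by (simp add: prod.delta)
  finally show ?thesis by (subst DM_lumped[OF order.refl]) (simp add: DM_negbin)
qed

text \<open>Lifting: a polynomial in s j whose two-type version lies in the space of degree-n
  orthogonal polynomials of the lumped law lies in the d-type space, because its inner product
  with a lower-degree polynomial only involves that polynomial's (lower-degree) marginal.\<close>
lemma Vspace_coord_lift:
  assumes j: "j < d" and pos: "\<forall>i<d. \<alpha> i > 0" and q: "degree q \<le> n"
    and V2: "Vspace 2 (lumped d \<alpha> j) N n (\<lambda>r. poly q (real (r 0)))"
  shows "Vspace d \<alpha> N n (\<lambda>r. poly q (real (r j)))"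
  unfolding Vspace_def
proof (intro conjI impI allI)
  show "polyfun d N n (\<lambda>r. poly q (real (r j)))" by (rule polyfun_coord_poly[OF j q])
next
  fix h assume n: "0 < n" and h: "polyfun d N (n - 1) h"
  obtain p where p: "poly_marginal d \<alpha> N j (n - 1) h p"
    using poly_marginal_polyfun[OF j pos h] by blast
  have "polyfun 2 N (n - 1) (\<lambda>r. poly p (real (r 0)))"
    using p unfolding poly_marginal_def by (intro polyfun_coord_poly) auto
  then have "inner_DM 2 (lumped d \<alpha> j) N (\<lambda>r. poly q (real (r 0))) (\<lambda>r. poly p (real (r 0))) = 0"
    using V2 n unfolding Vspace_def by blast
  then show "inner_DM d \<alpha> N (\<lambda>r. poly q (real (r j))) h = 0"
    using inner_DM_coord[OF j p, of "\<lambda>k. poly q (real k)"] by simp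
qed

lemma Vspace_marginal_project:
  assumes j: "j < d" and VP: "Vspace d \<alpha> N n P" and p: "poly_marginal d \<alpha> N j n P p"
  shows "Vspace 2 (lumped d \<alpha> j) N n (\<lambda>r. poly p (real (r 0)))"
  unfolding Vspace_def
proof (intro conjI impI allI)
  show "polyfun 2 N n (\<lambda>r. poly p (real (r 0)))"
    using p unfolding poly_marginal_def by (intro polyfun_coord_poly) auto
next
  fix h assume n: "0 < n" and h: "polyfun 2 N (n - 1) h"
  obtain q where q: "degree q \<le> n - 1" "\<And>r. r \<in> simplex 2 N \<Longrightarrow> h r = poly q (real (r 0))"
    using polyfun2_univar[OF h] by blast
  have "inner_DM 2 (lumped d \<alpha> j) N (\<lambda>r. poly p (real (r 0))) h
      = inner_DM 2 (lumped d \<alpha> j) N (\<lambda>r. poly q (real (r 0))) (\<lambda>r. poly p (real (r 0)))"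
    unfolding inner_DM_ip by (subst ip_comm, rule ip_cong) (simp_all add: q(2))
  also have "\<dots> = inner_DM d \<alpha> N (\<lambda>r. poly q (real (r j))) P"
    by (rule inner_DM_coord[OF j p, of "\<lambda>k. poly q (real k)", symmetric])
  also have "\<dots> = inner_DM d \<alpha> N P (\<lambda>r. poly q (real (r j)))"
    unfolding inner_DM_ip by (rule ip_comm)
  also have "\<dots> = 0"
    using VP n polyfun_coord_poly[OF j q(1)] unfolding Vspace_def by blast
  finally show "inner_DM 2 (lumped d \<alpha> j) N (\<lambda>r. poly p (real (r 0))) h = 0" .
qed

lemma lifted_kernel_reproduces:
  assumes j: "j < d" and pos: "\<forall>i<d. \<alpha> i > 0"
    and q: "\<And>F. Vspace 2 (lumped d \<alpha> j) N n F
              \<Longrightarrow> inner_DM 2 (lumped d \<alpha> j) N (\<lambda>r. poly q (real (r 0))) F = F (pt2 N N)"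
    and VP: "Vspace d \<alpha> N n P"
  shows "inner_DM d \<alpha> N (\<lambda>r. poly q (real (r j))) P = P (\<lambda>i. if i = j then N else 0)"
proof -
  let ?v = "\<lambda>i. if i = j then N else 0"
  obtain p where p: "poly_marginal d \<alpha> N j n P p"
    using poly_marginal_polyfun[OF j pos] VP unfolding Vspace_def by blast
  have "inner_DM d \<alpha> N (\<lambda>r. poly q (real (r j))) P
      = inner_DM 2 (lumped d \<alpha> j) N (\<lambda>r. poly q (real (r 0))) (\<lambda>r. poly p (real (r 0)))"
    by (rule inner_DM_coord[OF j p])
  also have "\<dots> = poly p (real N)"
    using q[OF Vspace_marginal_project[OF j VP p]] by (simp add: pt2_def)
  also have "\<dots> = P ?v"
  proof -
    have "DM d \<alpha> N ?v * poly p (real N) = DM d \<alpha> N ?v * P ?v"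
      using p fiber_sum_vertex[of d \<alpha> N j P] unfolding poly_marginal_def DM_vertex[OF j] by simp
    moreover have "DM d \<alpha> N ?v > 0"
      using j pos by (intro DM_pos vabs_pos) auto
    ultimately show ?thesis by simp
  qed
  finally show ?thesis .
qed

theorem proposition3p2:
  fixes d N n j :: nat and \<alpha> :: "nat \<Rightarrow> real" and s :: "nat \<Rightarrow> nat"
  assumes "d \<ge> 2"
    and "\<forall>i<d. \<alpha> i > 0"
    and "j < d"
    and "s \<in> simplex d N"
    and "n \<le> N"
  shows "hahn_kernel d \<alpha> N n s (\<lambda>i. if i = j then N else 0)
         = hahn2 (\<alpha> j) (vabs d \<alpha> - \<alpha> j) N n (s j) N"
proof -
  note pos = assms(2) and j = assms(3) and s = assms(4)
  let ?\<beta> = "lumped d \<alpha> j"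
  have vpos: "vabs d \<alpha> > 0" using j pos by (intro vabs_pos) auto
  have pos2: "\<forall>i<2. ?\<beta> i > 0" and vpos2: "vabs 2 ?\<beta> > 0"
    using lumped_pos[OF assms(1-3)] vpos by (simp_all add: vabs_lumped)
  let ?K = "\<lambda>r. hahn_kernel 2 ?\<beta> N n r (pt2 N N)"
  have VK: "Vspace 2 ?\<beta> N n ?K" by (rule hahn_kernel_Vspace[OF pos2 vpos2])
  then obtain q where q: "degree q \<le> n" "\<And>r. r \<in> simplex 2 N \<Longrightarrow> ?K r = poly q (real (r 0))"
    unfolding Vspace_def using polyfun2_univar by blast
  have Vq: "Vspace 2 ?\<beta> N n (\<lambda>r. poly q (real (r 0)))" by (rule Vspace_cong[OF VK q(2)])
  have reproduces: "inner_DM 2 ?\<beta> N (\<lambda>r. poly q (real (r 0))) F = F (pt2 N N)"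
    if "Vspace 2 ?\<beta> N n F" for F
  proof -
    have "inner_DM 2 ?\<beta> N (\<lambda>r. poly q (real (r 0))) F = inner_DM 2 ?\<beta> N ?K F"
      unfolding inner_DM_ip by (rule ip_cong) (simp_all add: q(2))
    then show ?thesis
      using hahn_kernel_reproduces[OF pos2 vpos2 pt2_simplex[OF order.refl] that] by simp
  qed
  have "hahn_kernel d \<alpha> N n s (\<lambda>i. if i = j then N else 0) = poly q (real (s j))"
    by (rule hahn_kernel_unique[OF pos vpos Vspace_coord_lift[OF j pos q(1) Vq]
          lifted_kernel_reproduces[OF j pos reproduces] s])
  also have "\<dots> = ?K (pt2 N (s j))"
    using q(2)[OF pt2_simplex[OF simplex_coord_le[OF s j]]] by (simp add: pt2_def)
  finally show ?thesis by (simp add: hahn2_def lumped_def)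
qed

end
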